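(* Any protocol $P$ among $n$ players that achieves sender anonymity and is resistant against collusions of any $t<n-1$ players, where the only resources available are pairwise shared secret key bits, a reliable broadcast channel and public communication, uses at least $n(n-1)/2$ bits of pairwise shared key; i.e. its key-sharing graph must be the complete graph on $n$ nodes.
   Context: The key-sharing graph of the protocol is the undirected graph $G=(V,E)$ whose nodes are the players, with an edge between nodes $i$ and $j$ iff $i$ and $j$ share one bit of secret key; the number of pairwise shared key bits is $|E|$. Sender anonymity against collusions of $t$ players: for an adversary corrupting a set of $t$ players not including the sender $s$ and observing all communication $C$ and the randomness $G^t$ of the corrupted players, $\max_S\Pr[S=s\mid G^t,C]=\max_S\Pr[S=s]=1/(n-t)$, maximum over random variables $S$ depending only on $C$ and $G^t$. *)

theory Defs
  imports "HOL-Probability.Probability"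
begin

text \<open>Players are the natural numbers below n. A protocol runs for a fixed number
  of rounds; in each round every player broadcasts one symbol, computed from its own
  index, its own input (Some m if it is the sender of message m, None otherwise),
  its own key bits (those on edges of the key-sharing graph incident to it), its own
  private randomness and the public transcript so far.\<close>

record ('m, 'c, 'r) protocol =
  rounds :: nat
  rand   :: "nat \<Rightarrow> 'r pmf"
  msg    :: "nat \<Rightarrow> 'm option \<Rightarrow> (nat set \<Rightarrow> bool) \<Rightarrow> 'r \<Rightarrow> (nat \<Rightarrow> 'c) list \<Rightarrow> 'c"
  out    :: "nat \<Rightarrow> 'm option \<Rightarrow> (nat set \<Rightarrow> bool) \<Rightarrow> 'r \<Rightarrow> (nat \<Rightarrow> 'c) list \<Rightarrow> 'm"

definition complete_graph_edges :: "nat \<Rightarrow> nat set set" where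
  "complete_graph_edges n = {{i, j} | i j. i < n \<and> j < n \<and> i \<noteq> j}"

definition key_pmf :: "nat set set \<Rightarrow> (nat set \<Rightarrow> bool) pmf" where
  "key_pmf E = Pi_pmf E False (\<lambda>_. pmf_of_set (UNIV :: bool set))"

definition key_view :: "nat \<Rightarrow> (nat set \<Rightarrow> bool) \<Rightarrow> nat set \<Rightarrow> bool" where
  "key_view p k = (\<lambda>e. if p \<in> e then k e else False)"

definition inputs :: "nat \<Rightarrow> 'm \<Rightarrow> nat \<Rightarrow> 'm option" where
  "inputs s m = (\<lambda>p. if p = s then Some m else None)"

fun run_rounds :: "('m, 'c, 'r) protocol \<Rightarrow> nat \<Rightarrow> (nat \<Rightarrow> 'm option) \<Rightarrow>
    (nat set \<Rightarrow> bool) \<Rightarrow> (nat \<Rightarrow> 'r) \<Rightarrow> nat \<Rightarrow> (nat \<Rightarrow> 'c) list" where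
  "run_rounds P n x k \<rho> 0 = []"
| "run_rounds P n x k \<rho> (Suc r) =
     (let h = run_rounds P n x k \<rho> r
      in h @ [\<lambda>p. if p < n then msg P p (x p) (key_view p k) (\<rho> p) h else undefined])"

definition transcript :: "('m, 'c, 'r) protocol \<Rightarrow> nat \<Rightarrow> (nat \<Rightarrow> 'm option) \<Rightarrow>
    (nat set \<Rightarrow> bool) \<Rightarrow> (nat \<Rightarrow> 'r) \<Rightarrow> (nat \<Rightarrow> 'c) list" where
  "transcript P n x k \<rho> = run_rounds P n x k \<rho> (rounds P)"

definition rand_pmf :: "('m, 'c, 'r) protocol \<Rightarrow> nat \<Rightarrow> (nat \<Rightarrow> 'r) pmf" where
  "rand_pmf P n = Pi_pmf {..<n} undefined (rand P)"

definition correct :: "('m, 'c, 'r) protocol \<Rightarrow> nat \<Rightarrow> nat set set \<Rightarrow> bool" where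
  "correct P n E \<longleftrightarrow>
     (\<forall>s<n. \<forall>m. \<forall>k \<in> set_pmf (key_pmf E). \<forall>\<rho> \<in> set_pmf (rand_pmf P n). \<forall>p<n.
        out P p (inputs s m p) (key_view p k) (\<rho> p) (transcript P n (inputs s m) k \<rho>) = m)"

definition adv_view :: "('m, 'c, 'r) protocol \<Rightarrow> nat \<Rightarrow> nat set set \<Rightarrow> nat set \<Rightarrow> nat \<Rightarrow> 'm \<Rightarrow>
    ((nat \<Rightarrow> 'c) list \<times> (nat set \<Rightarrow> bool) \<times> (nat \<Rightarrow> 'r)) pmf" where
  "adv_view P n E T s m =
     do { k \<leftarrow> key_pmf E;
          \<rho> \<leftarrow> rand_pmf P n;
          return_pmf (transcript P n (inputs s m) k \<rho>,
                      (\<lambda>e. if e \<inter> T \<noteq> {} then k e else False),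
                      (\<lambda>p. if p \<in> T then \<rho> p else undefined)) }"

definition guess_prob :: "('m, 'c, 'r) protocol \<Rightarrow> nat \<Rightarrow> nat set set \<Rightarrow> nat set \<Rightarrow> 'm \<Rightarrow>
    ((nat \<Rightarrow> 'c) list \<times> (nat set \<Rightarrow> bool) \<times> (nat \<Rightarrow> 'r) \<Rightarrow> nat) \<Rightarrow> real" where
  "guess_prob P n E T m g =
     measure_pmf.prob
       (do { s \<leftarrow> pmf_of_set ({..<n} - T);
             v \<leftarrow> adv_view P n E T s m;
             return_pmf (s, v) })
       {(s, v). g v = s}"

definition sender_anonymous :: "('m, 'c, 'r) protocol \<Rightarrow> nat \<Rightarrow> nat set set \<Rightarrow> bool" where
  "sender_anonymous P n E \<longleftrightarrow>
     (\<forall>T. T \<subseteq> {..<n} \<longrightarrow> card T < n - 1 \<longrightarrow>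
        (\<forall>m. (SUP g. guess_prob P n E T m g) = 1 / real (n - card T)))"

end

theory Submission
  imports Defs
begin

text \<open>Suppose players \<open>i\<close> and \<open>j\<close> share no key bit, and let the coalition be all other players
  (\<open>n - 2 < n - 1\<close> of them). If the coalition's guessing advantage is nil, its view has the same
  distribution whether \<open>i\<close> or \<open>j\<close> sends \<open>m\<close>. Every key bit lies on an edge meeting the coalition,
  so this view determines the joint law \<open>L(x\<^sub>i, x\<^sub>j)\<close> of transcript, whole key and coalition coins
  for inputs \<open>x\<^sub>i, x\<^sub>j\<close> (\<open>-\<close> meaning no input). Given key and coalition coins, the coins of \<open>i\<close> and \<open>j\<close> are independent
  and are tested against the transcript separately, so \<open>L(x\<^sub>i, x\<^sub>j) = f \<cdot> \<alpha>(x\<^sub>i) \<cdot> \<beta>(x\<^sub>j)\<close> pointwise.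
  From \<open>L(m, -) = L(-, m)\<close> we get \<open>L(-, m)\<^sup>2 = L(m, m) \<cdot> L(-, -)\<close>, which for distributions forces
  \<open>L(-, m) = L(-, -)\<close>. Hence a transcript that can occur when \<open>j\<close> sends \<open>m\<^sub>1\<close> can also occur,
  with the same view of \<open>i\<close>, when \<open>j\<close> sends \<open>m\<^sub>2\<close>, and \<open>i\<close> cannot output the right message both
  times.\<close>

lemma measure_pmf_prob_pair_Times:
  "measure_pmf.prob (pair_pmf M N) (A \<times> B) = measure_pmf.prob M A * measure_pmf.prob N B"
proof -
  have "measure_pmf.prob (pair_pmf M N) (A \<times> B) =
      measure_pmf.prob (pair_pmf M N) ((A \<times> B) \<inter> set_pmf (pair_pmf M N))"
    by (rule measure_Int_set_pmf[symmetric])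
  also have "(A \<times> B) \<inter> set_pmf (pair_pmf M N) = (A \<inter> set_pmf M) \<times> (B \<inter> set_pmf N)"
    by auto
  also have "measure_pmf.prob (pair_pmf M N) \<dots> =
      measure_pmf.prob M (A \<inter> set_pmf M) * measure_pmf.prob N (B \<inter> set_pmf N)"
    by (rule measure_pmf_prob_product) (auto intro: countable_subset)
  finally show ?thesis
    by (simp add: measure_Int_set_pmf)
qed

lemma measure_bind_pmf_of_set:
  assumes "finite S" "S \<noteq> {}"
  shows "measure_pmf.prob (pmf_of_set S \<bind> F) X = (\<Sum>s\<in>S. measure_pmf.prob (F s) X) / card S"
  unfolding measure_pmf_bind
  by (subst measure_pmf.measure_bind[where N = "count_space UNIV"])
    (auto simp: integral_pmf_of_set assms measure_pmf_in_subprob_space)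

lemma pmf_eq_if_indistinguishable:
  assumes "\<And>A. measure_pmf.prob M A + measure_pmf.prob N (- A) \<le> 1"
  shows "M = N"
proof -
  have compl: "measure_pmf.prob L (- A) = 1 - measure_pmf.prob L A" for L :: "'a pmf" and A
    using measure_pmf.prob_compl[of A L] by (simp add: Compl_eq_Diff_UNIV)
  have "measure_pmf.prob M A = measure_pmf.prob N A" for A
    using assms[of A] assms[of "- A"] by (simp add: compl)
  then show ?thesis
    by (intro pmf_eqI) (simp add: measure_pmf_single[symmetric])
qed

lemma pmf_eq_if_pmf_le:
  assumes "\<And>x. pmf M x \<le> pmf N x"
  shows "M = N"
proof (rule pmf_eqI)
  fix x
  have compl: "measure_pmf.prob L (UNIV - {x}) = 1 - pmf L x" for L :: "'a pmf"
    using measure_pmf.prob_compl[of "{x}" L] by (simp add: measure_pmf_single)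
  have "measure_pmf.prob M (UNIV - {x}) \<le> measure_pmf.prob N (UNIV - {x})"
    unfolding measure_pmf_conv_infsetsum
    by (rule infsetsum_mono_neutral_left)
      (auto simp: assms pmf_abs_summable intro: abs_summable_on_subset)
  then show "pmf M x = pmf N x"
    using assms[of x] by (simp add: compl)
qed

text \<open>If \<open>Q\<close> is pointwise the geometric mean of \<open>A\<close> and \<open>B\<close>, it lies below the arithmetic
  mean, which is again a distribution; so \<open>Q\<close> equals the arithmetic mean, and the equality case
  of AM-GM forces \<open>A = B\<close>.\<close>
lemma pmf_eq_if_square_eq_mult:
  assumes sq: "\<And>x. (pmf Q x)\<^sup>2 = pmf A x * pmf B x"
  shows "Q = B"
proof -
  define M where "M = bernoulli_pmf (1/2) \<bind> (\<lambda>c. if c then A else B)"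
  have pmf_M: "pmf M x = (pmf A x + pmf B x) / 2" for x
    unfolding M_def pmf_bind by simp
  have AM_GM: "(pmf A x + pmf B x)\<^sup>2 - (2 * pmf Q x)\<^sup>2 = (pmf A x - pmf B x)\<^sup>2" for x
    using sq[of x] by (simp add: power2_eq_square algebra_simps)
  have le: "2 * pmf Q x \<le> pmf A x + pmf B x" for x
  proof (rule power2_le_imp_le)
    show "(2 * pmf Q x)\<^sup>2 \<le> (pmf A x + pmf B x)\<^sup>2"
      using AM_GM[of x] zero_le_power2[of "pmf A x - pmf B x"] by linarith
  qed simp
  have "pmf Q x \<le> pmf M x" for x
    using le[of x] by (simp add: pmf_M)
  then have "Q = M"
    by (rule pmf_eq_if_pmf_le)
  then have halves: "2 * pmf Q x = pmf A x + pmf B x" for x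
    by (simp add: pmf_M)
  have same: "pmf A x = pmf B x" for x
  proof -
    have "(pmf A x + pmf B x)\<^sup>2 - (2 * pmf Q x)\<^sup>2 = 0"
      by (simp only: halves diff_self)
    then show ?thesis
      using AM_GM[of x] by simp
  qed
  show ?thesis
  proof (rule pmf_eqI)
    show "pmf Q x = pmf B x" for x
      using halves[of x] same[of x] by linarith
  qed
qed

lemma finite_complete_graph_edges: "finite (complete_graph_edges n)"
  by (rule finite_subset[of _ "Pow {..<n}"]) (auto simp: complete_graph_edges_def)

lemma card_complete_graph_edges: "card (complete_graph_edges n) = n choose 2"
proof -
  have "complete_graph_edges n = {e. e \<subseteq> {..<n} \<and> card e = 2}"
    unfolding complete_graph_edges_def by (auto simp: card_2_iff)
  then show ?thesis
    using n_subsets[of "{..<n}" 2] by simp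
qed

lemma real_choose_two: "real (n choose 2) = real n * (real n - 1) / 2"
  by (simp add: binomial_gbinomial gbinomial_pochhammer' numeral_2_eq_2 pochhammer_Suc_prod)

lemma run_rounds_eq_iff:
  "run_rounds P n x k \<rho> R = t \<longleftrightarrow> length t = R \<and>
     (\<forall>r<R. t ! r = (\<lambda>p. if p < n then msg P p (x p) (key_view p k) (\<rho> p) (take r t) else undefined))"
  (is "_ \<longleftrightarrow> length t = R \<and> (\<forall>r<R. ?round t r)")
proof (induction R arbitrary: t)
  case 0
  then show ?case by auto
next
  case (Suc R)
  show ?case
  proof (cases t rule: rev_cases)
    case (snoc h c)
    let ?next = "\<lambda>p. if p < n then msg P p (x p) (key_view p k) (\<rho> p) h else undefined"
    have "run_rounds P n x k \<rho> (Suc R) = t \<longleftrightarrow> run_rounds P n x k \<rho> R = h \<and> c = ?next"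
      using snoc by (auto simp: Let_def)
    also have "\<dots> \<longleftrightarrow> (length h = R \<and> (\<forall>r<R. ?round t r)) \<and> ?round t R"
    proof -
      have "run_rounds P n x k \<rho> R = h \<longleftrightarrow> length h = R \<and> (\<forall>r<R. ?round t r)"
        unfolding Suc.IH snoc by (auto simp: nth_append)
      moreover have "?round t R \<longleftrightarrow> c = ?next" if "length h = R"
        using snoc that by auto
      ultimately show ?thesis
        by blast
    qed
    also have "\<dots> \<longleftrightarrow> length t = Suc R \<and> (\<forall>r<Suc R. ?round t r)"
      using snoc by (auto simp: less_Suc_eq)
    finally show ?thesis .
  qed (simp add: Let_def)
qed

lemma guess_prob_two_honest:
  assumes "i \<noteq> j" and T: "{..<n} - T = {i, j}"
  shows "guess_prob P n E T m g =
    (measure_pmf.prob (adv_view P n E T i m) {v. g v = i} +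
     measure_pmf.prob (adv_view P n E T j m) {v. g v = j}) / 2"
proof -
  have "Pair s -` {(s', v). g v = s'} = {v. g v = s}" for s
    by auto
  then show ?thesis
    using assms unfolding guess_prob_def T
    by (simp add: measure_bind_pmf_of_set map_pmf_def[symmetric])
qed

lemma sender_anonymous_adv_view_eq:
  assumes anonymous: "sender_anonymous P n E" and players: "i < n" "j < n" "i \<noteq> j"
  shows "adv_view P n E ({..<n} - {i, j}) i m = adv_view P n E ({..<n} - {i, j}) j m"
proof -
  define T where "T = {..<n} - {i, j}"
  have honest: "{..<n} - T = {i, j}"
    using players by (auto simp: T_def)
  have "card T = n - 2"
    using players by (auto simp: T_def card_Diff_subset)
  then have "(SUP g. guess_prob P n E T m g) = 1 / 2"
    using anonymous players unfolding sender_anonymous_def T_def by auto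
  moreover have "bdd_above (range (guess_prob P n E T m))"
    unfolding guess_prob_def by (intro bdd_aboveI2[where M = 1] measure_pmf.prob_le_1)
  ultimately have le_half: "guess_prob P n E T m g \<le> 1 / 2" for g
    by (metis UNIV_I cSUP_upper)
  have "measure_pmf.prob (adv_view P n E T i m) A + measure_pmf.prob (adv_view P n E T j m) (- A) \<le> 1"
    for A
  proof -
    have "{v. (if v \<in> A then i else j) = i} = A" "{v. (if v \<in> A then i else j) = j} = - A"
      using players by auto
    then show ?thesis
      using le_half[of "\<lambda>v. if v \<in> A then i else j"] players honest
      by (simp add: guess_prob_two_honest)
  qed
  then show ?thesis
    unfolding T_def by (rule pmf_eq_if_indistinguishable)
qed

locale missing_edge =
  fixes P :: "('m, 'c, 'r) protocol" and n :: nat and E :: "nat set set" and i j :: nat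
  assumes players: "i < n" "j < n" "i \<noteq> j"
    and graph: "E \<subseteq> complete_graph_edges n"
    and no_shared_key: "{i, j} \<notin> E"
begin

definition coalition :: "nat set" where
  "coalition = {..<n} - {i, j}"

definition coalition_rand :: "(nat \<Rightarrow> 'r) pmf" where
  "coalition_rand = Pi_pmf coalition undefined (rand P)"

definition pair_inputs :: "'m option \<Rightarrow> 'm option \<Rightarrow> nat \<Rightarrow> 'm option" where
  "pair_inputs a b = (\<lambda>p. if p = i then a else if p = j then b else None)"

definition joint_view :: "'m option \<Rightarrow> 'm option \<Rightarrow>
    ((nat \<Rightarrow> 'c) list \<times> (nat set \<Rightarrow> bool) \<times> (nat \<Rightarrow> 'r)) pmf" where
  "joint_view a b =
     map_pmf (\<lambda>(k, \<sigma>, ri, rj). (transcript P n (pair_inputs a b) k (\<sigma>(i := ri, j := rj)), k, \<sigma>))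
       (pair_pmf (key_pmf E) (pair_pmf coalition_rand (pair_pmf (rand P i) (rand P j))))"

definition consistent_rand :: "nat \<Rightarrow> 'm option \<Rightarrow> (nat \<Rightarrow> 'c) list \<Rightarrow> (nat set \<Rightarrow> bool) \<Rightarrow> 'r set" where
  "consistent_rand p a t k = {r. \<forall>q<length t. (t ! q) p = msg P p a (key_view p k) r (take q t)}"

definition coalition_consistent :: "(nat \<Rightarrow> 'c) list \<Rightarrow> (nat set \<Rightarrow> bool) \<Rightarrow> (nat \<Rightarrow> 'r) \<Rightarrow> bool" where
  "coalition_consistent t k \<sigma> \<longleftrightarrow> length t = rounds P \<and>
     (\<forall>q<length t. \<forall>p. p \<noteq> i \<longrightarrow> p \<noteq> j \<longrightarrow>
        (t ! q) p = (if p < n then msg P p None (key_view p k) (\<sigma> p) (take q t) else undefined))"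

definition restrict_to_coalition :: "(nat \<Rightarrow> 'c) list \<times> (nat set \<Rightarrow> bool) \<times> (nat \<Rightarrow> 'r) \<Rightarrow>
    (nat \<Rightarrow> 'c) list \<times> (nat set \<Rightarrow> bool) \<times> (nat \<Rightarrow> 'r)" where
  "restrict_to_coalition = (\<lambda>(t, k, \<sigma>).
     (t, \<lambda>e. if e \<inter> coalition \<noteq> {} then k e else False, \<lambda>p. if p \<in> coalition then \<sigma> p else undefined))"

lemma finite_coalition: "finite coalition"
  and i_notin_coalition: "i \<notin> coalition"
  and j_notin_coalition: "j \<notin> coalition"
  and lessThan_eq_insert_coalition: "{..<n} = insert i (insert j coalition)"
  using players by (auto simp: coalition_def)

lemma rand_pmf_split:
  "rand_pmf P n =
     map_pmf (\<lambda>(\<sigma>, ri, rj). \<sigma>(i := ri, j := rj)) (pair_pmf coalition_rand (pair_pmf (rand P i) (rand P j)))"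
proof -
  have "rand_pmf P n = Pi_pmf (insert i (insert j coalition)) undefined (rand P)"
    unfolding rand_pmf_def lessThan_eq_insert_coalition ..
  also have "\<dots> = do {ri \<leftarrow> rand P i; rj \<leftarrow> rand P j; \<sigma> \<leftarrow> coalition_rand; return_pmf (\<sigma>(j := rj, i := ri))}"
    using finite_coalition i_notin_coalition j_notin_coalition players(3)
    by (simp add: Pi_pmf_insert' coalition_rand_def bind_assoc_pmf bind_return_pmf)
  also have "\<dots> = do {\<sigma> \<leftarrow> coalition_rand; ri \<leftarrow> rand P i; rj \<leftarrow> rand P j; return_pmf (\<sigma>(j := rj, i := ri))}"
    by (subst bind_commute_pmf[of "rand P j"], subst bind_commute_pmf[of "rand P i"]) simp
  also have "\<dots> = map_pmf (\<lambda>(\<sigma>, ri, rj). \<sigma>(i := ri, j := rj))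
      (pair_pmf coalition_rand (pair_pmf (rand P i) (rand P j)))"
    using players(3)
    by (simp add: pair_pmf_def map_pmf_def bind_assoc_pmf bind_return_pmf fun_upd_twist)
  finally show ?thesis .
qed

text \<open>The rectangle property of protocols.\<close>
lemma transcript_eq_iff:
  "transcript P n (pair_inputs a b) k (\<sigma>(i := ri, j := rj)) = t \<longleftrightarrow>
     coalition_consistent t k \<sigma> \<and> ri \<in> consistent_rand i a t k \<and> rj \<in> consistent_rand j b t k"
  using players
  unfolding transcript_def run_rounds_eq_iff coalition_consistent_def consistent_rand_def
    pair_inputs_def fun_eq_iff
  by (auto; metis)

lemma pmf_joint_view:
  "pmf (joint_view a b) (t, k, \<sigma>) = pmf (key_pmf E) k * (pmf coalition_rand \<sigma> *
     (if coalition_consistent t k \<sigma>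
      then measure_pmf.prob (rand P i) (consistent_rand i a t k) *
           measure_pmf.prob (rand P j) (consistent_rand j b t k)
      else 0))"
proof -
  have "(\<lambda>(k, \<sigma>, ri, rj). (transcript P n (pair_inputs a b) k (\<sigma>(i := ri, j := rj)), k, \<sigma>)) -` {(t, k, \<sigma>)} =
      {k} \<times> {\<sigma>} \<times>
      (if coalition_consistent t k \<sigma> then consistent_rand i a t k \<times> consistent_rand j b t k else {})"
    (is "?run -` _ = ?rectangle")
  proof (intro set_eqI)
    fix x :: "(nat set \<Rightarrow> bool) \<times> (nat \<Rightarrow> 'r) \<times> 'r \<times> 'r"
    obtain k' \<sigma>' ri rj where "x = (k', \<sigma>', ri, rj)"
      by (cases x) auto
    then show "x \<in> ?run -` {(t, k, \<sigma>)} \<longleftrightarrow> x \<in> ?rectangle"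
      by (cases "k' = k \<and> \<sigma>' = \<sigma>") (auto simp: transcript_eq_iff)
  qed
  then show ?thesis
    unfolding joint_view_def pmf_map
    by (simp add: measure_pmf_prob_pair_Times measure_pmf_single)
qed

lemma adv_view_eq_restrict_joint_view:
  assumes "s = i \<or> s = j"
  shows "adv_view P n E coalition s m =
    map_pmf restrict_to_coalition (joint_view (if s = i then Some m else None) (if s = j then Some m else None))"
proof -
  have "inputs s m = pair_inputs (if s = i then Some m else None) (if s = j then Some m else None)"
    using assms players(3) by (auto simp: inputs_def pair_inputs_def fun_eq_iff)
  moreover have "(\<lambda>p. if p \<in> coalition then (\<sigma>(i := ri, j := rj)) p else undefined) =
      (\<lambda>p. if p \<in> coalition then \<sigma> p else undefined)" for \<sigma> :: "nat \<Rightarrow> 'r" and ri rj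
    using i_notin_coalition j_notin_coalition by auto
  ultimately show ?thesis
    unfolding adv_view_def rand_pmf_split joint_view_def restrict_to_coalition_def
    by (simp add: pair_pmf_def map_pmf_def bind_assoc_pmf bind_return_pmf)
qed

lemma edge_meets_coalition:
  assumes "e \<in> E"
  shows "e \<inter> coalition \<noteq> {}"
proof
  assume disjoint: "e \<inter> coalition = {}"
  obtain a b where "e = {a, b}" "a < n" "b < n" "a \<noteq> b"
    using assms graph unfolding complete_graph_edges_def by blast
  with disjoint have "e = {i, j}"
    unfolding coalition_def by auto
  with assms no_shared_key show False
    by simp
qed

text \<open>The coalition sees every key bit, since the only edge avoiding it would be \<open>{i, j}\<close>.\<close>
lemma joint_view_eq_if_restrict_eq:
  assumes "map_pmf restrict_to_coalition (joint_view a b) = map_pmf restrict_to_coalition (joint_view a' b')"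
  shows "joint_view a b = joint_view a' b'"
proof -
  define extend :: "(nat \<Rightarrow> 'c) list \<times> (nat set \<Rightarrow> bool) \<times> (nat \<Rightarrow> 'r) \<Rightarrow> _" where
    "extend = (\<lambda>(t, k, \<sigma>). (t, \<lambda>e. if e \<in> E then k e else False, \<sigma>))"
  have key_outside_E: "k e = False" if "k \<in> set_pmf (key_pmf E)" "e \<notin> E" for k e
    using that set_Pi_pmf_subset[OF finite_subset[OF graph finite_complete_graph_edges]]
    unfolding key_pmf_def by fastforce
  have rand_outside_coalition: "\<sigma> p = undefined" if "\<sigma> \<in> set_pmf coalition_rand" "p \<notin> coalition" for \<sigma> p
    using that set_Pi_pmf_subset[OF finite_coalition] unfolding coalition_rand_def by fastforce
  have extend_restrict: "extend (restrict_to_coalition (t, k, \<sigma>)) = (t, k, \<sigma>)"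
    if "k \<in> set_pmf (key_pmf E)" "\<sigma> \<in> set_pmf coalition_rand" for t k \<sigma>
    using key_outside_E[OF that(1)] rand_outside_coalition[OF that(2)] edge_meets_coalition
    unfolding extend_def restrict_to_coalition_def by (auto simp: fun_eq_iff)
  have "map_pmf extend (map_pmf restrict_to_coalition (joint_view a b)) = joint_view a b" for a b
    unfolding joint_view_def map_pmf_comp
    by (intro map_pmf_cong) (auto simp: extend_restrict)
  then show ?thesis
    using assms by metis
qed

lemma joint_view_swap:
  assumes "adv_view P n E coalition i m = adv_view P n E coalition j m"
  shows "joint_view (Some m) None = joint_view None (Some m)"
proof (rule joint_view_eq_if_restrict_eq)
  show "map_pmf restrict_to_coalition (joint_view (Some m) None) =
      map_pmf restrict_to_coalition (joint_view None (Some m))"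
    using assms adv_view_eq_restrict_joint_view[of i m] adv_view_eq_restrict_joint_view[of j m] players(3)
    by simp
qed

lemma joint_view_independent_of_input_j:
  assumes swap: "joint_view (Some m) None = joint_view None (Some m)"
  shows "joint_view None (Some m) = joint_view None None"
proof (rule pmf_eq_if_square_eq_mult)
  fix v :: "(nat \<Rightarrow> 'c) list \<times> (nat set \<Rightarrow> bool) \<times> (nat \<Rightarrow> 'r)"
  obtain t k \<sigma> where v: "v = (t, k, \<sigma>)"
    by (cases v)
  have "(pmf (joint_view None (Some m)) v)\<^sup>2 =
      pmf (joint_view (Some m) None) v * pmf (joint_view None (Some m)) v"
    using swap by (simp add: power2_eq_square)
  also have "\<dots> = pmf (joint_view (Some m) (Some m)) v * pmf (joint_view None None) v"
    unfolding v pmf_joint_view by (simp add: algebra_simps)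
  finally show "(pmf (joint_view None (Some m)) v)\<^sup>2 =
      pmf (joint_view (Some m) (Some m)) v * pmf (joint_view None None) v" .
qed

lemma not_correct_if_adv_views_eq:
  fixes m1 m2 :: 'm
  assumes "m1 \<noteq> m2"
    and views_eq: "\<And>m. adv_view P n E coalition i m = adv_view P n E coalition j m"
  shows "\<not> correct P n E"
proof
  assume correct: "correct P n E"
  have same: "joint_view None (Some m1) = joint_view None (Some m2)"
    using joint_view_independent_of_input_j[OF joint_view_swap[OF views_eq]] by simp
  obtain t k \<sigma> where "(t, k, \<sigma>) \<in> set_pmf (joint_view None (Some m1))"
    using set_pmf_not_empty by (metis ex_in_conv prod_cases3)
  then have support: "pmf (joint_view None (Some m')) (t, k, \<sigma>) \<noteq> 0" if "m' \<in> {m1, m2}" for m'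
    using that same by (auto simp: set_pmf_iff)
  have k: "k \<in> set_pmf (key_pmf E)" and \<sigma>: "\<sigma> \<in> set_pmf coalition_rand"
    and consistent: "coalition_consistent t k \<sigma>"
    and "measure_pmf.prob (rand P i) (consistent_rand i None t k) \<noteq> 0"
    using support[of m1] by (auto simp: pmf_joint_view set_pmf_iff split: if_splits)
  then obtain ri where ri: "ri \<in> set_pmf (rand P i)" "ri \<in> consistent_rand i None t k"
    by (auto simp: measure_pmf_zero_iff)
  have i_outputs: "out P i None (key_view i k) ri t = m'" if "m' \<in> {m1, m2}" for m'
  proof -
    have "measure_pmf.prob (rand P j) (consistent_rand j (Some m') t k) \<noteq> 0"
      using support[OF that] by (auto simp: pmf_joint_view split: if_splits)
    then obtain rj where rj: "rj \<in> set_pmf (rand P j)" "rj \<in> consistent_rand j (Some m') t k"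
      by (auto simp: measure_pmf_zero_iff)
    let ?\<rho> = "\<sigma>(i := ri, j := rj)"
    have "transcript P n (pair_inputs None (Some m')) k ?\<rho> = t"
      using transcript_eq_iff consistent ri rj by blast
    moreover have "inputs j m' = pair_inputs None (Some m')"
      using players(3) by (auto simp: inputs_def pair_inputs_def)
    moreover have "?\<rho> \<in> set_pmf (rand_pmf P n)"
      using \<sigma> ri rj unfolding rand_pmf_split by force
    then have "out P i (inputs j m' i) (key_view i k) (?\<rho> i) (transcript P n (inputs j m') k ?\<rho>) = m'"
      using correct players k unfolding correct_def by blast
    ultimately show ?thesis
      using players(3) by (simp add: pair_inputs_def)
  qed
  from i_outputs[of m1] i_outputs[of m2] \<open>m1 \<noteq> m2\<close> show False
    by simp
qed

end

theorem mainTheorem5: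
  fixes P :: "('m, 'c, 'r) protocol" and n :: nat and E :: "nat set set"
  assumes two_messages: "\<exists>m1 m2 :: 'm. m1 \<noteq> m2"
    and graph: "E \<subseteq> complete_graph_edges n"
    and correct: "correct P n E"
    and anonymous: "sender_anonymous P n E"
  shows "E = complete_graph_edges n \<and> real n * (real n - 1) / 2 \<le> real (card E)"
proof -
  have "E = complete_graph_edges n"
  proof (rule ccontr)
    assume "E \<noteq> complete_graph_edges n"
    then obtain i j where "i < n" "j < n" "i \<noteq> j" "{i, j} \<notin> E"
      using graph unfolding complete_graph_edges_def by blast
    then interpret missing_edge P n E i j
      using graph by unfold_locales
    obtain m1 m2 :: 'm where "m1 \<noteq> m2"
      using two_messages by blast
    moreover have "adv_view P n E coalition i m = adv_view P n E coalition j m" for m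
      unfolding coalition_def using anonymous players by (rule sender_anonymous_adv_view_eq)
    ultimately show False
      using not_correct_if_adv_views_eq correct by blast
  qed
  then show ?thesis
    by (simp add: card_complete_graph_edges real_choose_two)
qed

end
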